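(* Let $G=(V,E)$ be a finite simple graph and $v\in V$. Let $G-v$ be the graph obtained from $G$ by deleting $v$ and all edges incident to $v$, and let $G/v$ be the graph obtained from $G$ by deleting $v$ and making the open neighbourhood $N_G(v)$ a clique (already adjacent pairs remain simply adjacent). Then $$\frac{\gamma_{coe}(G-v)+\gamma_{coe}(G/v)}{2}-\deg(v)+1\leq \gamma_{coe}(G)\leq \frac{\gamma_{coe}(G-v)+\gamma_{coe}(G/v)}{2}+\deg(v)+1.$$
   Context: All graphs are finite and simple. For a graph $G=(V,E)$ and $v\in V$, $N_G(v)=\{u\in V: uv\in E\}$ and $\deg(v)=|N_G(v)|$. A set $D\subseteq V$ is a dominating set if every vertex of $V\setminus D$ is adjacent to at least one vertex of $D$. A dominating set $D$ is a co-even dominating set if $\deg(v)$ is even for every $v\in V\setminus D$ (degrees taken in the graph under consideration). The co-even domination number $\gamma_{coe}(G)$ is the minimum cardinality of a co-even dominating set of $G$. *)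

theory Defs
  imports Complex_Main
begin

type_synonym 'a graph = "'a set \<times> 'a set set"

definition simple_graph :: "'a graph \<Rightarrow> bool" where
  "simple_graph G \<longleftrightarrow> finite (fst G) \<and>
     (\<forall>e\<in>snd G. e \<subseteq> fst G \<and> card e = 2)"

definition nbhd :: "'a graph \<Rightarrow> 'a \<Rightarrow> 'a set" where
  "nbhd G v = {u \<in> fst G. {u, v} \<in> snd G}"

definition degree :: "'a graph \<Rightarrow> 'a \<Rightarrow> nat" where
  "degree G v = card (nbhd G v)"

definition dominating_set :: "'a graph \<Rightarrow> 'a set \<Rightarrow> bool" where
  "dominating_set G D \<longleftrightarrow> D \<subseteq> fst G \<and>
     (\<forall>v \<in> fst G - D. \<exists>u \<in> D. {u, v} \<in> snd G)"

definition co_even_dominating_set :: "'a graph \<Rightarrow> 'a set \<Rightarrow> bool" where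
  "co_even_dominating_set G D \<longleftrightarrow> dominating_set G D \<and>
     (\<forall>v \<in> fst G - D. even (degree G v))"

definition gamma_coe :: "'a graph \<Rightarrow> nat" where
  "gamma_coe G = Min (card ` {D. co_even_dominating_set G D})"

definition delete_vertex :: "'a graph \<Rightarrow> 'a \<Rightarrow> 'a graph" where
  "delete_vertex G v = (fst G - {v}, {e \<in> snd G. v \<notin> e})"

definition contract_vertex :: "'a graph \<Rightarrow> 'a \<Rightarrow> 'a graph" where
  "contract_vertex G v = (fst G - {v},
     {e \<in> snd G. v \<notin> e} \<union> {{x, y} | x y. x \<in> nbhd G v \<and> y \<in> nbhd G v \<and> x \<noteq> y})"

end

theory Submission
  imports Defs
begin

text \<open>Both \<open>G - v\<close> and \<open>G / v\<close> have vertex set \<open>V - {v}\<close> and agree with \<open>G\<close> on all edges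
  at vertices outside the closed neighbourhood \<open>N[v]\<close>; in particular such vertices keep their
  degree and hence its parity. So if \<open>H\<close> is either graph, a co-even dominating set of \<open>H\<close> together
  with \<open>N[v]\<close> is one of \<open>G\<close>, and a co-even dominating set of \<open>G\<close> with \<open>v\<close> replaced by \<open>N(v)\<close> is
  one of \<open>H\<close>. Counting gives \<open>\<gamma>(G) \<le> \<gamma>(H) + deg v + 1\<close> and \<open>\<gamma>(H) \<le> \<gamma>(G) + deg v - 1\<close>
  (if \<open>v \<notin> D\<close>, some neighbour of \<open>v\<close> is already in \<open>D\<close>); averaging over the two choices
  of \<open>H\<close> yields the theorem.\<close>

lemma co_even_dominating_set_vertices: "co_even_dominating_set G (fst G)"
  unfolding co_even_dominating_set_def dominating_set_def by auto

lemma finite_card_co_even_dominating_sets: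
  assumes "finite (fst G)"
  shows "finite (card ` {D. co_even_dominating_set G D})"
proof -
  have "{D. co_even_dominating_set G D} \<subseteq> Pow (fst G)"
    by (auto simp: co_even_dominating_set_def dominating_set_def)
  then show ?thesis
    using assms by (meson finite_Pow_iff finite_imageI finite_subset)
qed

lemma gamma_coe_le_card:
  assumes "finite (fst G)" and "co_even_dominating_set G D"
  shows "gamma_coe G \<le> card D"
  unfolding gamma_coe_def
  using finite_card_co_even_dominating_sets[OF assms(1)] assms(2) by auto

lemma gamma_coe_attained:
  assumes "finite (fst G)"
  obtains D where "co_even_dominating_set G D" and "card D = gamma_coe G"
proof -
  have "gamma_coe G \<in> card ` {D. co_even_dominating_set G D}"
    unfolding gamma_coe_def
    using finite_card_co_even_dominating_sets[OF assms] co_even_dominating_set_vertices[of G]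
    by (intro Min_in) auto
  then show ?thesis using that by auto
qed

lemma card_Diff_vertex_Un_nbhd:
  assumes "simple_graph G" and "v \<in> fst G" and "dominating_set G D"
  shows "card ((D - {v}) \<union> nbhd G v) + 1 \<le> card D + degree G v"
proof -
  have fin_D: "finite D" and fin_N: "finite (nbhd G v)"
    using assms by (auto simp: simple_graph_def dominating_set_def nbhd_def
        intro: finite_subset)
  show ?thesis
  proof (cases "v \<in> D")
    case True
    have "card ((D - {v}) \<union> nbhd G v) \<le> card (D - {v}) + card (nbhd G v)"
      by (rule card_Un_le)
    moreover have "card (D - {v}) + 1 = card D"
      using card.remove[OF fin_D True] by simp
    ultimately show ?thesis unfolding degree_def by linarith
  next
    case False
    then obtain u where u: "u \<in> D" "{u, v} \<in> snd G"
      using assms(2,3) unfolding dominating_set_def by blast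
    have u_nbhd: "u \<in> nbhd G v"
      using u assms(3) by (auto simp: nbhd_def dominating_set_def)
    have "(D - {v}) \<union> nbhd G v = D \<union> (nbhd G v - {u})"
      using False u u_nbhd by auto
    then have "card ((D - {v}) \<union> nbhd G v) \<le> card D + card (nbhd G v - {u})"
      by (metis card_Un_le)
    moreover have "card (nbhd G v - {u}) + 1 = card (nbhd G v)"
      using card.remove[OF fin_N u_nbhd] by simp
    ultimately show ?thesis unfolding degree_def by linarith
  qed
qed

locale agrees_off_closed_nbhd =
  fixes G H :: "'a graph" and v :: 'a
  assumes simple: "simple_graph G" and vertex: "v \<in> fst G"
    and vertices_eq: "fst H = fst G - {v}"
    and edges_eq: "\<And>u w. w \<in> fst G \<Longrightarrow> w \<noteq> v \<Longrightarrow> w \<notin> nbhd G v \<Longrightarrow> u \<noteq> v \<Longrightarrow>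
        {u, w} \<in> snd H \<longleftrightarrow> {u, w} \<in> snd G"
begin

lemma finite_vertices: "finite (fst G)"
  using simple unfolding simple_graph_def by auto

lemma nbhd_eq:
  assumes "w \<in> fst G" "w \<noteq> v" "w \<notin> nbhd G v"
  shows "nbhd H w = nbhd G w"
proof (intro set_eqI)
  fix u
  have "{v, w} \<notin> snd G" using assms by (auto simp: nbhd_def insert_commute)
  then show "u \<in> nbhd H w \<longleftrightarrow> u \<in> nbhd G w"
    using edges_eq[OF assms] by (cases "u = v") (auto simp: nbhd_def vertices_eq)
qed

lemma degree_eq:
  "w \<in> fst G \<Longrightarrow> w \<noteq> v \<Longrightarrow> w \<notin> nbhd G v \<Longrightarrow> degree H w = degree G w"
  unfolding degree_def using nbhd_eq by simp

lemma co_even_dominating_set_add_closed_nbhd: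
  assumes "co_even_dominating_set H D"
  shows "co_even_dominating_set G (D \<union> nbhd G v \<union> {v})"
  unfolding co_even_dominating_set_def dominating_set_def
proof (intro conjI ballI)
  have D_sub: "D \<subseteq> fst G - {v}"
    using assms vertices_eq by (auto simp: co_even_dominating_set_def dominating_set_def)
  then show "D \<union> nbhd G v \<union> {v} \<subseteq> fst G"
    using vertex by (auto simp: nbhd_def)
  fix w assume w: "w \<in> fst G - (D \<union> nbhd G v \<union> {v})"
  then have w_H: "w \<in> fst H - D" using vertices_eq by auto
  then obtain u where u: "u \<in> D" "{u, w} \<in> snd H"
    using assms unfolding co_even_dominating_set_def dominating_set_def by blast
  then have "{u, w} \<in> snd G" using edges_eq[of w u] w D_sub by auto
  then show "\<exists>u \<in> D \<union> nbhd G v \<union> {v}. {u, w} \<in> snd G" using u by auto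
  have "even (degree H w)"
    using w_H assms by (auto simp: co_even_dominating_set_def)
  then show "even (degree G w)" using w degree_eq[of w] by auto
qed

lemma co_even_dominating_set_swap_nbhd:
  assumes "co_even_dominating_set G D"
  shows "co_even_dominating_set H ((D - {v}) \<union> nbhd G v)"
  unfolding co_even_dominating_set_def dominating_set_def
proof (intro conjI ballI)
  show "(D - {v}) \<union> nbhd G v \<subseteq> fst H"
    using assms simple vertices_eq
    by (auto simp: co_even_dominating_set_def dominating_set_def nbhd_def simple_graph_def)
  fix w assume w: "w \<in> fst H - ((D - {v}) \<union> nbhd G v)"
  then have w_G: "w \<in> fst G - D" "w \<noteq> v" "w \<notin> nbhd G v" using vertices_eq by auto
  then obtain u where u: "u \<in> D" "{u, w} \<in> snd G"
    using assms unfolding co_even_dominating_set_def dominating_set_def by blast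
  moreover have "u \<noteq> v" using u w_G by (auto simp: nbhd_def insert_commute)
  ultimately show "\<exists>u \<in> (D - {v}) \<union> nbhd G v. {u, w} \<in> snd H"
    using edges_eq[of w u] w_G by auto
  show "even (degree H w)"
    using w_G assms degree_eq[of w] by (auto simp: co_even_dominating_set_def)
qed

lemma gamma_coe_le_gamma_coe_add_degree:
  "gamma_coe G \<le> gamma_coe H + degree G v + 1"
proof -
  obtain D where D: "co_even_dominating_set H D" "card D = gamma_coe H"
    using gamma_coe_attained vertices_eq finite_vertices by (metis finite_Diff)
  have "gamma_coe G \<le> card (D \<union> nbhd G v \<union> {v})"
    by (rule gamma_coe_le_card[OF finite_vertices co_even_dominating_set_add_closed_nbhd[OF D(1)]])
  also have "\<dots> \<le> card D + card (nbhd G v) + card {v}"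
    by (meson add_le_mono card_Un_le le_trans order_refl)
  finally show ?thesis using D(2) by (simp add: degree_def)
qed

lemma gamma_coe_add_one_le_gamma_coe_add_degree:
  "gamma_coe H + 1 \<le> gamma_coe G + degree G v"
proof -
  obtain D where D: "co_even_dominating_set G D" "card D = gamma_coe G"
    using gamma_coe_attained finite_vertices by blast
  have "gamma_coe H \<le> card ((D - {v}) \<union> nbhd G v)"
    using gamma_coe_le_card co_even_dominating_set_swap_nbhd[OF D(1)] vertices_eq finite_vertices
    by (metis finite_Diff)
  then show ?thesis
    using card_Diff_vertex_Un_nbhd[OF simple vertex] D
    by (fastforce simp: co_even_dominating_set_def)
qed

end

lemma agrees_off_closed_nbhd_delete_vertex:
  "simple_graph G \<Longrightarrow> v \<in> fst G \<Longrightarrow> agrees_off_closed_nbhd G (delete_vertex G v) v"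
  unfolding agrees_off_closed_nbhd_def delete_vertex_def by auto

lemma agrees_off_closed_nbhd_contract_vertex:
  "simple_graph G \<Longrightarrow> v \<in> fst G \<Longrightarrow> agrees_off_closed_nbhd G (contract_vertex G v) v"
  unfolding agrees_off_closed_nbhd_def contract_vertex_def by (auto simp: doubleton_eq_iff)

theorem mainTheorem5:
  fixes G :: "'a graph" and v :: 'a
  assumes "simple_graph G" and "v \<in> fst G"
  shows "(real (gamma_coe (delete_vertex G v)) + real (gamma_coe (contract_vertex G v))) / 2
            - real (degree G v) + 1 \<le> real (gamma_coe G)
         \<and> real (gamma_coe G) \<le>
           (real (gamma_coe (delete_vertex G v)) + real (gamma_coe (contract_vertex G v))) / 2
            + real (degree G v) + 1"
proof -
  interpret del: agrees_off_closed_nbhd G "delete_vertex G v" v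
    using agrees_off_closed_nbhd_delete_vertex[OF assms] .
  interpret con: agrees_off_closed_nbhd G "contract_vertex G v" v
    using agrees_off_closed_nbhd_contract_vertex[OF assms] .
  show ?thesis
    using del.gamma_coe_le_gamma_coe_add_degree del.gamma_coe_add_one_le_gamma_coe_add_degree
      con.gamma_coe_le_gamma_coe_add_degree con.gamma_coe_add_one_le_gamma_coe_add_degree
    by (simp add: field_simps)
qed

end
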